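(* For $r\geq 2$, $0\leq \alpha\leq 1-\frac{1}{r}$ and every $n\ge 1$, $\lambda_{\alpha}(T_{n,r})\leq \left(1-\frac{1}{r}\right)n$.
   Context: $\lambda_\alpha(G)$ is the largest eigenvalue of $A_\alpha(G)=\alpha D(G)+(1-\alpha)A(G)$ ($A$ adjacency matrix, $D$ diagonal degree matrix). $T_{n,r}$ is the $r$-partite Turán graph on $n$ vertices (complete $r$-partite graph with part sizes differing by at most one). *)

theory Defs
  imports "Jordan_Normal_Form.Char_Poly"
begin

text \<open>A simple graph on vertex set {0..<n} given by a symmetric irreflexive relation E.\<close>

definition adj_mat :: "nat \<Rightarrow> (nat \<Rightarrow> nat \<Rightarrow> bool) \<Rightarrow> real mat" where
  "adj_mat n E = mat n n (\<lambda>(i,j). if E i j then 1 else 0)"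

definition deg_mat :: "nat \<Rightarrow> (nat \<Rightarrow> nat \<Rightarrow> bool) \<Rightarrow> real mat" where
  "deg_mat n E = mat n n (\<lambda>(i,j). if i = j then real (card {k. k < n \<and> E i k}) else 0)"

definition A_alpha :: "real \<Rightarrow> nat \<Rightarrow> (nat \<Rightarrow> nat \<Rightarrow> bool) \<Rightarrow> real mat" where
  "A_alpha \<alpha> n E = \<alpha> \<cdot>\<^sub>m deg_mat n E + (1 - \<alpha>) \<cdot>\<^sub>m adj_mat n E"

text \<open>Largest eigenvalue of A_alpha (the matrix is real symmetric, so all eigenvalues are real).\<close>
definition lambda_alpha :: "real \<Rightarrow> nat \<Rightarrow> (nat \<Rightarrow> nat \<Rightarrow> bool) \<Rightarrow> real" where
  "lambda_alpha \<alpha> n E = Max {k. eigenvalue (A_alpha \<alpha> n E) k}"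

text \<open>Turan graph T_{n,r} on {0..<n}: vertex i lies in part (i mod r); parts have sizes
  differing by at most one; two vertices are adjacent iff they lie in different parts.\<close>
definition turan_adj :: "nat \<Rightarrow> nat \<Rightarrow> nat \<Rightarrow> bool" where
  "turan_adj r i j \<longleftrightarrow> i mod r \<noteq> j mod r"

end

theory Submission
  imports Defs "Jordan_Normal_Form.Spectral_Radius"
begin

text \<open>
  Every eigenvalue of a nonnegative matrix \<open>M\<close> is bounded in absolute value by \<open>c\<close> as soon as
  some positive vector \<open>x\<close> satisfies \<open>M x \<le> c x\<close> entrywise. For \<open>A\<^sub>\<alpha>(T\<^sub>n\<^sub>,\<^sub>r)\<close> take
  \<open>x\<^sub>j = 1 / (t + s\<^sub>j)\<close>, where \<open>s\<^sub>j\<close> is the size of the part of \<open>j\<close> and \<open>t = (1 - 1/r - \<alpha>) n\<close>;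
  then \<open>(A\<^sub>\<alpha> x)\<^sub>j \<le> (1 - 1/r) n x\<^sub>j\<close> reduces to \<open>(1 - \<alpha>) \<Sum>\<^sub>j x\<^sub>j \<le> 1\<close>, which follows from
  the concavity of \<open>s \<mapsto> s / (t + s)\<close> because the part sizes sum to \<open>n\<close>.
\<close>

lemma abs_eigenvalue_le_of_supersolution:
  fixes M :: "real mat" and x :: "nat \<Rightarrow> real"
  assumes M: "M \<in> carrier_mat n n"
    and nonneg: "\<And>i j. i < n \<Longrightarrow> j < n \<Longrightarrow> 0 \<le> M $$ (i,j)"
    and pos: "\<And>i. i < n \<Longrightarrow> 0 < x i"
    and super: "\<And>i. i < n \<Longrightarrow> (M *\<^sub>v vec n x) $ i \<le> c * x i"
    and "eigenvalue M l"
  shows "\<bar>l\<bar> \<le> c"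
proof -
  obtain v where v: "v \<in> carrier_vec n" "v \<noteq> 0\<^sub>v n" and Mv: "M *\<^sub>v v = l \<cdot>\<^sub>v v"
    using \<open>eigenvalue M l\<close> M unfolding eigenvalue_def eigenvector_def by auto
  obtain i0 where i0: "i0 < n" "v $ i0 \<noteq> 0"
    using v by (metis carrier_vecD eq_vecI index_zero_vec(1) index_zero_vec(2))
  define m where "m = Max ((\<lambda>j. \<bar>v $ j\<bar> / x j) ` {0..<n})"
  have "m \<in> (\<lambda>j. \<bar>v $ j\<bar> / x j) ` {0..<n}"
    unfolding m_def using i0 by (intro Max_in) auto
  then obtain i where i: "i < n" and vi: "\<bar>v $ i\<bar> = m * x i"
    using pos by fastforce
  have vj: "\<bar>v $ j\<bar> \<le> m * x j" if "j < n" for j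
  proof -
    have "\<bar>v $ j\<bar> / x j \<le> m" unfolding m_def using that by (intro Max_ge) auto
    then show ?thesis using pos[OF that] by (simp add: divide_le_eq)
  qed
  have "0 < m * x i0" using i0 vj[OF i0(1)] by linarith
  then have "0 < m" using pos[OF i0(1)] by (simp add: zero_less_mult_iff)
  have "\<bar>l\<bar> * \<bar>v $ i\<bar> = \<bar>\<Sum>j = 0..<n. M $$ (i,j) * v $ j\<bar>"
    using arg_cong[OF Mv, of "\<lambda>w. w $ i"] M v i
    by (simp add: scalar_prod_def abs_mult[symmetric])
  also have "\<dots> \<le> (\<Sum>j = 0..<n. M $$ (i,j) * (m * x j))"
    by (rule order_trans[OF sum_abs sum_mono])
       (use nonneg i vj in \<open>simp add: abs_mult mult_left_mono\<close>)
  also have "\<dots> = m * (M *\<^sub>v vec n x) $ i"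
    using M i by (simp add: scalar_prod_def sum_distrib_left algebra_simps)
  also have "\<dots> \<le> c * \<bar>v $ i\<bar>"
    using super[OF i] \<open>0 < m\<close> vi by (simp add: algebra_simps)
  finally show ?thesis
    using vi \<open>0 < m\<close> pos[OF i] by simp
qed

lemma div_add_le_tangent:
  fixes s t a :: real
  assumes "0 \<le> s" "0 \<le> t" "0 < a"
  shows "s / (t + s) \<le> a / (t + a) + t / (t + a)^2 * (s - a)"
proof (cases "s = 0 \<and> t = 0")
  case False
  then have "0 < t + s" using assms by auto
  have "a / (t + a) + t / (t + a)^2 * (s - a) - s / (t + s)
      = (a * (t + a) * (t + s) + t * (s - a) * (t + s) - s * (t + a)^2) / ((t + a)^2 * (t + s))"
    using \<open>0 < t + s\<close> assms by (simp add: diff_divide_distrib add_divide_distrib power2_eq_square)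
  also have "\<dots> = t * (s - a)^2 / ((t + a)^2 * (t + s))"
    by (simp add: algebra_simps power2_eq_square)
  finally have "a / (t + a) + t / (t + a)^2 * (s - a) - s / (t + s)
      = t * (s - a)^2 / ((t + a)^2 * (t + s))" .
  moreover have "0 \<le> t * (s - a)^2 / ((t + a)^2 * (t + s))"
    using assms \<open>0 < t + s\<close> by simp
  ultimately show ?thesis by linarith
qed (use assms in simp)

lemma sum_div_add_le_mean:
  fixes s :: "'i \<Rightarrow> real" and t :: real
  assumes "finite I" "I \<noteq> {}" "0 \<le> t" "\<And>q. q \<in> I \<Longrightarrow> 0 \<le> s q" "0 < sum s I"
  shows "(\<Sum>q\<in>I. s q / (t + s q)) \<le> sum s I / (t + sum s I / card I)"
proof -
  define a where "a = sum s I / card I"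
  have "0 < card I" using assms by (simp add: card_gt_0_iff)
  then have "0 < a" "card I * a = sum s I" using assms by (auto simp: a_def)
  have "(\<Sum>q\<in>I. s q / (t + s q)) \<le> (\<Sum>q\<in>I. a / (t + a) + t / (t + a)^2 * (s q - a))"
    by (rule sum_mono) (use div_add_le_tangent assms \<open>0 < a\<close> in auto)
  also have "\<dots> = card I * a / (t + a) + t / (t + a)^2 * (sum s I - card I * a)"
    by (simp only: sum.distrib sum_constant sum_subtractf flip: sum_distrib_left) simp
  also have "\<dots> = card I * a / (t + a)"
    using \<open>card I * a = sum s I\<close> by simp
  finally show ?thesis using \<open>card I * a = sum s I\<close> by (simp add: a_def)
qed

lemma A_alpha_carrier: "A_alpha \<alpha> n E \<in> carrier_mat n n"
  by (simp add: A_alpha_def deg_mat_def adj_mat_def)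

lemma dim_A_alpha [simp]: "dim_row (A_alpha \<alpha> n E) = n" "dim_col (A_alpha \<alpha> n E) = n"
  using A_alpha_carrier by auto

lemma A_alpha_index:
  assumes "i < n" "j < n"
  shows "A_alpha \<alpha> n E $$ (i,j) =
    (if i = j then \<alpha> * card {k. k < n \<and> E i k} else 0) + (1 - \<alpha>) * (if E i j then 1 else 0)"
  using assms by (simp add: A_alpha_def deg_mat_def adj_mat_def)

lemma A_alpha_nonneg:
  assumes "0 \<le> \<alpha>" "\<alpha> \<le> 1" "i < n" "j < n"
  shows "0 \<le> A_alpha \<alpha> n E $$ (i,j)"
  using assms by (simp add: A_alpha_index)

lemma index_A_alpha_mult_vec:
  assumes "i < n" "v \<in> carrier_vec n" "\<not> E i i"
  shows "(A_alpha \<alpha> n E *\<^sub>v v) $ i =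
    \<alpha> * card {k. k < n \<and> E i k} * v $ i + (1 - \<alpha>) * (\<Sum>j\<in>{j. j < n \<and> E i j}. v $ j)"
proof -
  have "(A_alpha \<alpha> n E *\<^sub>v v) $ i = (\<Sum>j = 0..<n. A_alpha \<alpha> n E $$ (i,j) * v $ j)"
    using assms A_alpha_carrier[of \<alpha> n E] by (simp add: scalar_prod_def)
  also have "\<dots> = (\<Sum>j = 0..<n. (if i = j then \<alpha> * card {k. k < n \<and> E i k} * v $ j else 0)
                      + (1 - \<alpha>) * (if E i j then v $ j else 0))"
    by (rule sum.cong) (auto simp: A_alpha_index assms)
  also have "\<dots> = \<alpha> * card {k. k < n \<and> E i k} * v $ i
                  + (1 - \<alpha>) * (\<Sum>j\<in>{j. j < n \<and> E i j}. v $ j)"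
    using assms(1) by (simp add: sum.distrib flip: sum_distrib_left sum.inter_filter)
  finally show ?thesis .
qed

lemma eigenvalue_A_alpha_regular:
  assumes "0 < n" "\<And>i. \<not> E i i" "\<And>i. i < n \<Longrightarrow> card {k. k < n \<and> E i k} = d"
  shows "eigenvalue (A_alpha \<alpha> n E) d"
proof -
  let ?v = "vec n (\<lambda>_. 1) :: real vec"
  have "(A_alpha \<alpha> n E *\<^sub>v ?v) $ i = d" if "i < n" for i
    using index_A_alpha_mult_vec[OF that, of ?v E \<alpha>] that assms by (simp add: algebra_simps)
  then have "A_alpha \<alpha> n E *\<^sub>v ?v = d \<cdot>\<^sub>v ?v"
    using A_alpha_carrier[of \<alpha> n E] by (intro eq_vecI) auto
  moreover have "?v $ 0 \<noteq> 0\<^sub>v n $ 0"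
    using \<open>0 < n\<close> by simp
  then have "?v \<noteq> 0\<^sub>v n" by metis
  ultimately show ?thesis
    unfolding eigenvalue_def eigenvector_def by (auto intro!: exI[of _ ?v])
qed

text \<open>Two non-adjacent vertices with the same neighbourhood give the eigenvector \<open>e\<^sub>i - e\<^sub>j\<close>.\<close>

lemma eigenvalue_A_alpha_twins:
  assumes "i < n" "j < n" "i \<noteq> j" "\<And>k. \<not> E k k"
    and "\<And>k. k < n \<Longrightarrow> E k i \<longleftrightarrow> E k j" and "\<And>k. E i k \<longleftrightarrow> E j k"
  shows "eigenvalue (A_alpha \<alpha> n E) (\<alpha> * card {k. k < n \<and> E i k})"
proof -
  let ?v = "vec n (\<lambda>k. if k = i then 1 else if k = j then -1 else 0) :: real vec"
  have "A_alpha \<alpha> n E *\<^sub>v ?v = (\<alpha> * card {k. k < n \<and> E i k}) \<cdot>\<^sub>v ?v"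
  proof (rule eq_vecI)
    fix k assume "k < dim_vec ((\<alpha> * card {k. k < n \<and> E i k}) \<cdot>\<^sub>v ?v)"
    then have k: "k < n" by simp
    let ?F = "{m. m < n \<and> E k m}"
    have "(\<Sum>m\<in>?F. ?v $ m) = (\<Sum>m\<in>?F. (if m = i then 1 else 0) - (if m = j then 1 else 0))"
      by (rule sum.cong) (use assms in auto)
    also have "\<dots> = 0"
      using assms k by (simp add: sum_subtractf)
    finally show "(A_alpha \<alpha> n E *\<^sub>v ?v) $ k = ((\<alpha> * card {k. k < n \<and> E i k}) \<cdot>\<^sub>v ?v) $ k"
      using index_A_alpha_mult_vec[OF k, of ?v E \<alpha>] k assms by simp
  qed (simp add: A_alpha_carrier)
  moreover have "?v $ i \<noteq> 0\<^sub>v n $ i"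
    using assms(1) by simp
  then have "?v \<noteq> 0\<^sub>v n" by metis
  ultimately show ?thesis
    unfolding eigenvalue_def eigenvector_def by (auto intro!: exI[of _ ?v])
qed

text \<open>\<open>Max {}\<close> is unspecified, so the spectrum must be shown nonempty.\<close>

lemma lambda_alpha_le:
  assumes "\<exists>l. eigenvalue (A_alpha \<alpha> n E) l" "\<And>l. eigenvalue (A_alpha \<alpha> n E) l \<Longrightarrow> l \<le> c"
  shows "lambda_alpha \<alpha> n E \<le> c"
proof -
  have "finite {l. eigenvalue (A_alpha \<alpha> n E) l}"
    using card_finite_spectrum(1)[OF A_alpha_carrier] unfolding spectrum_def by simp
  then show ?thesis
    using assms unfolding lambda_alpha_def by (subst Max_le_iff) auto
qed

definition part_size :: "nat \<Rightarrow> nat \<Rightarrow> nat \<Rightarrow> nat" where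
  "part_size n r q = card {k. k < n \<and> k mod r = q}"

lemma part_size_pos: "i < n \<Longrightarrow> 0 < part_size n r (i mod r)"
  unfolding part_size_def by (subst card_gt_0_iff) auto

lemma sum_turan_neighbours:
  fixes h :: "nat \<Rightarrow> real"
  shows "(\<Sum>j\<in>{j. j < n \<and> turan_adj r i j}. h j)
    = (\<Sum>j = 0..<n. h j) - (\<Sum>j\<in>{j. j < n \<and> j mod r = i mod r}. h j)"
proof -
  have "{0..<n} = {j. j < n \<and> turan_adj r i j} \<union> {j. j < n \<and> j mod r = i mod r}"
    by (auto simp: turan_adj_def)
  moreover have "sum h ({j. j < n \<and> turan_adj r i j} \<union> {j. j < n \<and> j mod r = i mod r})
      = sum h {j. j < n \<and> turan_adj r i j} + sum h {j. j < n \<and> j mod r = i mod r}"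
    by (rule sum.union_disjoint) (auto simp: turan_adj_def)
  ultimately show ?thesis by simp
qed

lemma sum_mod_classes:
  fixes h :: "nat \<Rightarrow> real"
  assumes "0 < r"
  shows "(\<Sum>j\<in>{j. j < n \<and> j mod r = q}. h (j mod r)) = part_size n r q * h q"
    and "(\<Sum>j = 0..<n. h (j mod r)) = (\<Sum>q = 0..<r. part_size n r q * h q)"
proof -
  show part: "(\<Sum>j\<in>{j. j < n \<and> j mod r = q}. h (j mod r)) = part_size n r q * h q" for q
    by (simp add: part_size_def)
  have "(\<Sum>j = 0..<n. h (j mod r)) = (\<Sum>q = 0..<r. \<Sum>j\<in>{j \<in> {0..<n}. j mod r = q}. h (j mod r))"
    by (rule sum.group[symmetric]) (use assms in auto)
  also have "\<dots> = (\<Sum>q = 0..<r. part_size n r q * h q)"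
    by (simp add: part part_size_def flip: Collect_conj_eq)
  finally show "(\<Sum>j = 0..<n. h (j mod r)) = (\<Sum>q = 0..<r. part_size n r q * h q)" .
qed

lemma index_turan_A_alpha_mult_vec:
  fixes w :: "nat \<Rightarrow> real"
  assumes "0 < r" "i < n"
  defines "s \<equiv> \<lambda>q. real (part_size n r q)"
  shows "(A_alpha \<alpha> n (turan_adj r) *\<^sub>v vec n (\<lambda>j. w (j mod r))) $ i
    = \<alpha> * (n - s (i mod r)) * w (i mod r)
      + (1 - \<alpha>) * ((\<Sum>q = 0..<r. s q * w q) - s (i mod r) * w (i mod r))"
proof -
  let ?x = "vec n (\<lambda>j. w (j mod r))"
  have "real (card {k. k < n \<and> turan_adj r i k}) = n - s (i mod r)"
    using sum_turan_neighbours[where h = "\<lambda>_. 1" and n = n and r = r and i = i]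
      sum_mod_classes[OF \<open>0 < r\<close>, where h = "\<lambda>_. 1" and n = n]
    by (simp add: s_def)
  moreover have "(\<Sum>j\<in>{j. j < n \<and> turan_adj r i j}. ?x $ j)
      = (\<Sum>j\<in>{j. j < n \<and> turan_adj r i j}. w (j mod r))"
    by (rule sum.cong) auto
  moreover have "(\<Sum>j\<in>{j. j < n \<and> turan_adj r i j}. w (j mod r))
      = (\<Sum>q = 0..<r. s q * w q) - s (i mod r) * w (i mod r)"
    using sum_turan_neighbours[where h = "\<lambda>j. w (j mod r)" and n = n and r = r and i = i]
      sum_mod_classes[OF \<open>0 < r\<close>, where h = w and n = n]
    by (simp add: s_def)
  moreover have "\<not> turan_adj r i i" by (simp add: turan_adj_def)
  ultimately show ?thesis
    using index_A_alpha_mult_vec[OF \<open>i < n\<close>, of ?x "turan_adj r" \<alpha>] \<open>i < n\<close>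
    by (simp only: index_vec carrier_vec_def mem_Collect_eq dim_vec) simp
qed

lemma turan_A_alpha_has_eigenvalue:
  assumes "0 < r" "0 < n"
  shows "\<exists>l. eigenvalue (A_alpha \<alpha> n (turan_adj r)) l"
proof (cases "n \<le> r")
  case True
  have "card {k. k < n \<and> turan_adj r i k} = n - 1" if "i < n" for i
  proof -
    have "{k. k < n \<and> turan_adj r i k} = {0..<n} - {i}"
      using that True by (auto simp: turan_adj_def)
    then show ?thesis using that by simp
  qed
  then have "eigenvalue (A_alpha \<alpha> n (turan_adj r)) (n - 1)"
    by (intro eigenvalue_A_alpha_regular[OF \<open>0 < n\<close>]) (auto simp: turan_adj_def)
  then show ?thesis ..
next
  case False
  then have "eigenvalue (A_alpha \<alpha> n (turan_adj r)) (\<alpha> * card {k. k < n \<and> turan_adj r 0 k})"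
    using \<open>0 < r\<close> by (intro eigenvalue_A_alpha_twins) (auto simp: turan_adj_def)
  then show ?thesis ..
qed

definition turan_weight :: "real \<Rightarrow> nat \<Rightarrow> nat \<Rightarrow> nat \<Rightarrow> real" where
  "turan_weight \<alpha> n r q = 1 / ((1 - 1 / r - \<alpha>) * n + part_size n r q)"

lemma turan_weight_pos:
  assumes "\<alpha> \<le> 1 - 1 / r" "j < n"
  shows "0 < turan_weight \<alpha> n r (j mod r)"
  using part_size_pos[OF \<open>j < n\<close>, of r] assms(1) unfolding turan_weight_def
  by (intro divide_pos_pos add_nonneg_pos mult_nonneg_nonneg) auto

lemma turan_weight_sum_le:
  assumes "0 < r" "0 \<le> \<alpha>" "\<alpha> \<le> 1 - 1 / r" "0 < n"
  shows "(1 - \<alpha>) * (\<Sum>q = 0..<r. part_size n r q * turan_weight \<alpha> n r q) \<le> 1"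
proof -
  define t where "t = (1 - 1 / r - \<alpha>) * n"
  define s where "s q = real (part_size n r q)" for q
  have "0 \<le> t" using assms by (simp add: t_def)
  have "\<alpha> < 1" using assms(1,3) by (smt (verit) divide_pos_pos of_nat_0_less_iff)
  have sum_s: "(\<Sum>q = 0..<r. s q) = n"
    using sum_mod_classes(2)[OF \<open>0 < r\<close>, where h = "\<lambda>_. 1" and n = n] by (simp add: s_def)
  have "(\<Sum>q = 0..<r. part_size n r q * turan_weight \<alpha> n r q) = (\<Sum>q = 0..<r. s q / (t + s q))"
    by (simp add: s_def t_def turan_weight_def)
  also have "\<dots> \<le> sum s {0..<r} / (t + sum s {0..<r} / card {0..<r})"
    by (rule sum_div_add_le_mean) (use \<open>0 \<le> t\<close> assms sum_s in \<open>auto simp: s_def\<close>)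
  also have "\<dots> = n / (t + n / r)"
    by (simp add: sum_s)
  also have "\<dots> = 1 / (1 - \<alpha>)"
    using assms \<open>\<alpha> < 1\<close> by (simp add: t_def field_simps)
  finally show ?thesis
    using \<open>\<alpha> < 1\<close> by (simp add: field_simps)
qed

lemma turan_A_alpha_supersolution:
  assumes "0 < r" "0 \<le> \<alpha>" "\<alpha> \<le> 1 - 1 / r" "i < n"
  shows "(A_alpha \<alpha> n (turan_adj r) *\<^sub>v vec n (\<lambda>j. turan_weight \<alpha> n r (j mod r))) $ i
    \<le> (1 - 1 / r) * n * turan_weight \<alpha> n r (i mod r)"
proof -
  define s where "s = real (part_size n r (i mod r))"
  define w where "w = turan_weight \<alpha> n r (i mod r)"
  define S where "S = (\<Sum>q = 0..<r. part_size n r q * turan_weight \<alpha> n r q)"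
  have "w * ((1 - 1 / r - \<alpha>) * n + s) = 1"
    using turan_weight_pos[OF assms(3,4)] by (simp add: w_def s_def turan_weight_def)
  then have "(A_alpha \<alpha> n (turan_adj r) *\<^sub>v vec n (\<lambda>j. turan_weight \<alpha> n r (j mod r))) $ i
      = (1 - 1 / r) * n * w - (1 - (1 - \<alpha>) * S)"
    using index_turan_A_alpha_mult_vec[OF \<open>0 < r\<close> \<open>i < n\<close>, of \<alpha> "turan_weight \<alpha> n r"]
    by (simp add: s_def w_def S_def algebra_simps)
  also have "\<dots> \<le> (1 - 1 / r) * n * w"
    using turan_weight_sum_le[OF assms(1-3)] \<open>i < n\<close> by (simp add: S_def)
  finally show ?thesis by (simp add: w_def)
qed

theorem lemma5p8:
  fixes r n :: nat and \<alpha> :: real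
  assumes "r \<ge> 2" and "0 \<le> \<alpha>" and "\<alpha> \<le> 1 - 1 / real r" and "n \<ge> 1"
  shows "lambda_alpha \<alpha> n (turan_adj r) \<le> (1 - 1 / real r) * real n"
proof (rule lambda_alpha_le)
  have "0 < r" "0 < n" using assms by auto
  then show "\<exists>l. eigenvalue (A_alpha \<alpha> n (turan_adj r)) l"
    by (rule turan_A_alpha_has_eigenvalue)
  have "\<alpha> \<le> 1" using assms(3) by (smt (verit) divide_nonneg_nonneg of_nat_0_le_iff)
  fix l assume "eigenvalue (A_alpha \<alpha> n (turan_adj r)) l"
  then have "\<bar>l\<bar> \<le> (1 - 1 / r) * n"
    using abs_eigenvalue_le_of_supersolution[OF A_alpha_carrier A_alpha_nonneg[OF assms(2) \<open>\<alpha> \<le> 1\<close>]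
        turan_weight_pos[OF assms(3)] turan_A_alpha_supersolution[OF \<open>0 < r\<close> assms(2,3)]]
    by simp
  then show "l \<le> (1 - 1 / r) * n" by simp
qed

end
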